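(* Let $\alpha(t)$ be a smooth function on an interval $I$ with $\alpha'(t)\neq0$ on $I$, and let $a,b$ be real constants. Put $$\kappa=\frac{\alpha''}{2\alpha'}+\frac{\mu_0ab}{4\alpha'},\qquad X=x\cos\alpha+y\sin\alpha,\qquad Y=-x\sin\alpha+y\cos\alpha,$$ and on $\Omega=\{(t,x,y,z): t\in I,\ X\neq0\}$ define $$u=-\kappa x-\alpha'y-\frac{6\nu\cos\alpha}{X}+\frac{6\nu\sin\alpha\,Y}{X^2},\quad v=\alpha'x-\kappa y-\frac{6\nu\sin\alpha}{X}-\frac{6\nu\cos\alpha\,Y}{X^2},\quad w=2\kappa z,$$ $$H^1=-(aX+bY)\sin\alpha,\qquad H^2=(aX+bY)\cos\alpha,\qquad H^3=-bz.$$ Then there exists a smooth function $p$ on $\Omega$ such that $\mathbf v=(u,v,w)^t$, $\mathbf H=(H^1,H^2,H^3)^t$, $p$ satisfy the MHD system on $\Omega$.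
   Context: Throughout, $\nu,\eta,\mu_0,\rho$ are positive constants. The MHD system for $\mathbf v=(u,v,w)^t$, $\mathbf H=(H^1,H^2,H^3)^t$, $p$, functions of $(t,x,y,z)$, is $$\nabla\cdot\mathbf v=0,\quad \mathbf v_t+(\mathbf v\cdot\nabla)\mathbf v-\mu_0(\mathbf H\times\operatorname{rot}\mathbf H)+\tfrac1\rho\nabla p=\nu\Delta\mathbf v,\quad \nabla\cdot\mathbf H=0,\quad \mathbf H_t=\operatorname{rot}(\mathbf v\times\mathbf H)+\eta\Delta\mathbf H,$$ with $\operatorname{rot}$ the curl and $\Delta$ the componentwise Laplacian in $(x,y,z)$. A prime denotes $d/dt$; $\alpha$, $X$, $Y$, $\kappa$ depend on $t$ through $\alpha(t)$. *)

theory Defs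
  imports "HOL-Analysis.Analysis"
begin

type_synonym sfield = "real \<Rightarrow> real \<Rightarrow> real \<Rightarrow> real \<Rightarrow> real"

definition pdt :: "sfield \<Rightarrow> sfield" where
  "pdt f = (\<lambda>t x y z. deriv (\<lambda>s. f s x y z) t)"
definition pdx :: "sfield \<Rightarrow> sfield" where
  "pdx f = (\<lambda>t x y z. deriv (\<lambda>s. f t s y z) x)"
definition pdy :: "sfield \<Rightarrow> sfield" where
  "pdy f = (\<lambda>t x y z. deriv (\<lambda>s. f t x s z) y)"
definition pdz :: "sfield \<Rightarrow> sfield" where
  "pdz f = (\<lambda>t x y z. deriv (\<lambda>s. f t x y s) z)"

definition pd :: "nat \<Rightarrow> sfield \<Rightarrow> sfield" where
  "pd i f = (if i = 0 then pdt f else if i = 1 then pdx f else if i = 2 then pdy f else pdz f)"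

text \<open>Smoothness (C-infinity) of a real function of one variable on a set I
  (meant for open I): all iterated derivatives exist on I.\<close>
definition smooth1 :: "real set \<Rightarrow> (real \<Rightarrow> real) \<Rightarrow> bool" where
  "smooth1 I f \<longleftrightarrow> (\<forall>n. \<forall>t\<in>I. ((deriv ^^ n) f) differentiable (at t))"

definition smooth4 :: "(real \<times> real \<times> real \<times> real) set \<Rightarrow> sfield \<Rightarrow> bool" where
  "smooth4 \<Omega> f \<longleftrightarrow> (\<forall>is. set is \<subseteq> {0..3} \<longrightarrow>
     continuous_on \<Omega> (\<lambda>(t,x,y,z). foldr pd is f t x y z) \<and>
     (\<forall>(t,x,y,z)\<in>\<Omega>.
        (\<lambda>s. foldr pd is f s x y z) differentiable (at t) \<and>
        (\<lambda>s. foldr pd is f t s y z) differentiable (at x) \<and>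
        (\<lambda>s. foldr pd is f t x s z) differentiable (at y) \<and>
        (\<lambda>s. foldr pd is f t x y s) differentiable (at z)))"

definition lap :: "sfield \<Rightarrow> sfield" where
  "lap f = (\<lambda>t x y z. pdx (pdx f) t x y z + pdy (pdy f) t x y z + pdz (pdz f) t x y z)"

definition rot1 :: "sfield \<Rightarrow> sfield \<Rightarrow> sfield \<Rightarrow> sfield" where
  "rot1 A1 A2 A3 = (\<lambda>t x y z. pdy A3 t x y z - pdz A2 t x y z)"
definition rot2 :: "sfield \<Rightarrow> sfield \<Rightarrow> sfield \<Rightarrow> sfield" where
  "rot2 A1 A2 A3 = (\<lambda>t x y z. pdz A1 t x y z - pdx A3 t x y z)"
definition rot3 :: "sfield \<Rightarrow> sfield \<Rightarrow> sfield \<Rightarrow> sfield" where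
  "rot3 A1 A2 A3 = (\<lambda>t x y z. pdx A2 t x y z - pdy A1 t x y z)"

definition cr1 :: "sfield \<Rightarrow> sfield \<Rightarrow> sfield \<Rightarrow> sfield \<Rightarrow> sfield \<Rightarrow> sfield \<Rightarrow> sfield" where
  "cr1 A1 A2 A3 B1 B2 B3 = (\<lambda>t x y z. A2 t x y z * B3 t x y z - A3 t x y z * B2 t x y z)"
definition cr2 :: "sfield \<Rightarrow> sfield \<Rightarrow> sfield \<Rightarrow> sfield \<Rightarrow> sfield \<Rightarrow> sfield \<Rightarrow> sfield" where
  "cr2 A1 A2 A3 B1 B2 B3 = (\<lambda>t x y z. A3 t x y z * B1 t x y z - A1 t x y z * B3 t x y z)"
definition cr3 :: "sfield \<Rightarrow> sfield \<Rightarrow> sfield \<Rightarrow> sfield \<Rightarrow> sfield \<Rightarrow> sfield \<Rightarrow> sfield" where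
  "cr3 A1 A2 A3 B1 B2 B3 = (\<lambda>t x y z. A1 t x y z * B2 t x y z - A2 t x y z * B1 t x y z)"

definition conv :: "sfield \<Rightarrow> sfield \<Rightarrow> sfield \<Rightarrow> sfield \<Rightarrow> sfield" where
  "conv u v w f = (\<lambda>t x y z. u t x y z * pdx f t x y z + v t x y z * pdy f t x y z
                             + w t x y z * pdz f t x y z)"

definition MHD_solution ::
  "real \<Rightarrow> real \<Rightarrow> real \<Rightarrow> real \<Rightarrow> (real \<times> real \<times> real \<times> real) set \<Rightarrow>
   sfield \<Rightarrow> sfield \<Rightarrow> sfield \<Rightarrow> sfield \<Rightarrow> sfield \<Rightarrow> sfield \<Rightarrow> sfield \<Rightarrow> bool" where
  "MHD_solution \<nu> \<eta> \<mu>\<^sub>0 \<rho> \<Omega> u v w H1 H2 H3 p \<longleftrightarrow>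
    (\<forall>f\<in>{u, v, w, H1, H2, H3, p}. smooth4 \<Omega> f) \<and>
    (\<forall>(t,x,y,z)\<in>\<Omega>.
      pdx u t x y z + pdy v t x y z + pdz w t x y z = 0 \<and>
      pdt u t x y z + conv u v w u t x y z
        - \<mu>\<^sub>0 * cr1 H1 H2 H3 (rot1 H1 H2 H3) (rot2 H1 H2 H3) (rot3 H1 H2 H3) t x y z
        + (1 / \<rho>) * pdx p t x y z = \<nu> * lap u t x y z \<and>
      pdt v t x y z + conv u v w v t x y z
        - \<mu>\<^sub>0 * cr2 H1 H2 H3 (rot1 H1 H2 H3) (rot2 H1 H2 H3) (rot3 H1 H2 H3) t x y z
        + (1 / \<rho>) * pdy p t x y z = \<nu> * lap v t x y z \<and>
      pdt w t x y z + conv u v w w t x y z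
        - \<mu>\<^sub>0 * cr3 H1 H2 H3 (rot1 H1 H2 H3) (rot2 H1 H2 H3) (rot3 H1 H2 H3) t x y z
        + (1 / \<rho>) * pdz p t x y z = \<nu> * lap w t x y z \<and>
      pdx H1 t x y z + pdy H2 t x y z + pdz H3 t x y z = 0 \<and>
      pdt H1 t x y z = rot1 (cr1 u v w H1 H2 H3) (cr2 u v w H1 H2 H3) (cr3 u v w H1 H2 H3) t x y z
        + \<eta> * lap H1 t x y z \<and>
      pdt H2 t x y z = rot2 (cr1 u v w H1 H2 H3) (cr2 u v w H1 H2 H3) (cr3 u v w H1 H2 H3) t x y z
        + \<eta> * lap H2 t x y z \<and>
      pdt H3 t x y z = rot3 (cr1 u v w H1 H2 H3) (cr2 u v w H1 H2 H3) (cr3 u v w H1 H2 H3) t x y z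
        + \<eta> * lap H3 t x y z)"

end

theory Submission
  imports Defs
begin

(*
  On an open set Omega of (t,x,y,z)-space we introduce the "elementary" fields:
  the smallest class containing the constants, the coordinates and the derivatives
  t |-> alpha^(n) t of a fixed smooth time profile, closed under sums, products, sin, cos,
  inverses of fields without zeros on Omega, and under agreement on Omega.  By induction over
  this class every elementary field is continuous and partially differentiable on Omega, and
  its partial derivatives are again elementary; hence it is smooth in the sense of smooth4.

  Each MHD equation then becomes a rational identity in
  cos alpha, sin alpha, X, Y, kappa, ... which follows from cos^2 + sin^2 = 1 and
  kappa * alpha' = alpha''/2 + mu0 a b / 4.  The main theorem interprets the locale.
*)

(* Points of (t,x,y,z)-space.  A field f is probed along coordinate i through a point q by its
   slice s |-> f(q with i-th coordinate s); partial derivatives are derivatives of slices. *)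
type_synonym point = "real \<times> real \<times> real \<times> real"

definition coord :: "nat \<Rightarrow> point \<Rightarrow> real" where
  "coord i q = (case q of (t, x, y, z) \<Rightarrow>
     if i = 0 then t else if i = 1 then x else if i = 2 then y else z)"

definition move :: "nat \<Rightarrow> point \<Rightarrow> real \<Rightarrow> point" where
  "move i q s = (case q of (t, x, y, z) \<Rightarrow>
     if i = 0 then (s, x, y, z) else if i = 1 then (t, s, y, z) else if i = 2 then (t, x, s, z)
     else (t, x, y, s))"

definition uncurry4 :: "sfield \<Rightarrow> point \<Rightarrow> real" where
  "uncurry4 f q = (case q of (t, x, y, z) \<Rightarrow> f t x y z)"

definition slice :: "sfield \<Rightarrow> nat \<Rightarrow> point \<Rightarrow> real \<Rightarrow> real" where
  "slice f i q = (\<lambda>s. uncurry4 f (move i q s))"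

lemma uncurry4_apply [simp]: "uncurry4 f (t, x, y, z) = f t x y z"
  by (simp add: uncurry4_def)

lemma uncurry4_curried [simp]: "uncurry4 (\<lambda>t x y z. F (t, x, y, z)) = F"
  by (auto simp: uncurry4_def fun_eq_iff)

lemma uncurry4_pointwise [simp]:
  "uncurry4 (\<lambda>t x y z. c) = (\<lambda>q. c)"
  "uncurry4 (\<lambda>t x y z. f t x y z + g t x y z) = (\<lambda>q. uncurry4 f q + uncurry4 g q)"
  "uncurry4 (\<lambda>t x y z. f t x y z * g t x y z) = (\<lambda>q. uncurry4 f q * uncurry4 g q)"
  "uncurry4 (\<lambda>t x y z. f t x y z - g t x y z) = (\<lambda>q. uncurry4 f q - uncurry4 g q)"
  by (auto simp: uncurry4_def fun_eq_iff)

lemma move_coord [simp]: "move i q (coord i q) = q"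
  by (cases q) (auto simp: move_def coord_def)

lemma slice_at [simp]: "slice f i q (coord i q) = uncurry4 f q"
  by (simp add: slice_def)

lemma coord_move: "coord j (move i q s) = (if min j 3 = min i 3 then s else coord j q)"
  by (cases q) (auto simp: coord_def move_def)

lemma pd_as_slice: "uncurry4 (pd i f) q = deriv (slice f i q) (coord i q)"
  by (cases q) (auto simp: pd_def pdt_def pdx_def pdy_def pdz_def slice_def move_def coord_def)

lemma continuous_on_coord: "continuous_on S (coord j)"
proof -
  have "coord j = (\<lambda>q. if j = 0 then fst q else if j = 1 then fst (snd q)
                         else if j = 2 then fst (snd (snd q)) else snd (snd (snd q)))"
    by (auto simp: coord_def fun_eq_iff split: prod.split)
  then show ?thesis
    by (cases "j = 0"; cases "j = 1"; cases "j = 2") (auto intro!: continuous_intros)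
qed

lemma eventually_move_in:
  assumes "open \<Omega>" and "q \<in> \<Omega>"
  shows "\<forall>\<^sub>F s in nhds (coord i q). move i q s \<in> \<Omega>"
proof -
  have "continuous_on UNIV (move i q)"
    by (cases q; cases "i = 0"; cases "i = 1"; cases "i = 2")
      (auto simp: move_def intro!: continuous_intros)
  then have "open (move i q -` \<Omega>)"
    using assms(1) open_vimage by blast
  then show ?thesis
    using assms(2) eventually_nhds_in_open[of "move i q -` \<Omega>" "coord i q"] by simp
qed

definition regular :: "point set \<Rightarrow> sfield \<Rightarrow> bool" where
  "regular \<Omega> f \<longleftrightarrow> continuous_on \<Omega> (uncurry4 f) \<and>
     (\<forall>q\<in>\<Omega>. \<forall>i. slice f i q differentiable at (coord i q))"

lemma regular_slice_DERIV:
  assumes "regular \<Omega> f" and "q \<in> \<Omega>"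
  shows "DERIV (slice f i q) (coord i q) :> uncurry4 (pd i f) q"
  using assms by (simp add: regular_def pd_as_slice DERIV_deriv_iff_real_differentiable)

(* Smoothness criterion: a class of regular fields that is closed under partial derivatives
   consists of smooth fields, since all iterated partial derivatives stay in the class. *)
lemma smooth4_if_closed:
  assumes all_regular: "\<And>g. g \<in> S \<Longrightarrow> regular \<Omega> g"
    and pd_closed: "\<And>g i. g \<in> S \<Longrightarrow> pd i g \<in> S"
    and "f \<in> S"
  shows "smooth4 \<Omega> f"
proof -
  have "foldr pd is f \<in> S" for "is"
    using \<open>f \<in> S\<close> by (induction "is") (simp_all add: pd_closed)
  then have reg: "regular \<Omega> (foldr pd is f)" for "is"
    using all_regular by blast
  show ?thesis
    unfolding smooth4_def
  proof (intro allI impI conjI ballI)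
    fix "is" :: "nat list"
    have "(\<lambda>(t, x, y, z). foldr pd is f t x y z) = uncurry4 (foldr pd is f)"
      by (auto simp: fun_eq_iff)
    then show "continuous_on \<Omega> (\<lambda>(t, x, y, z). foldr pd is f t x y z)"
      using reg by (simp add: regular_def)
  next
    fix "is" :: "nat list" and q assume "q \<in> \<Omega>"
    obtain t x y z where q: "q = (t, x, y, z)" by (cases q)
    have "slice (foldr pd is f) i q differentiable at (coord i q)" for i
      using reg \<open>q \<in> \<Omega>\<close> by (simp add: regular_def)
    from this[of 0] this[of 1] this[of 2] this[of 3]
    show "case q of (t, x, y, z) \<Rightarrow>
        (\<lambda>s. foldr pd is f s x y z) differentiable at t \<and>
        (\<lambda>s. foldr pd is f t s y z) differentiable at x \<and>
        (\<lambda>s. foldr pd is f t x s z) differentiable at y \<and>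
        (\<lambda>s. foldr pd is f t x y s) differentiable at z"
      by (simp add: q slice_def move_def coord_def)
  qed
qed

(* The elementary fields on Omega built from a time profile alpha.  Closure under agreement on
   Omega lets us identify a field with any expression that coincides with it on Omega. *)
inductive_set elementary :: "point set \<Rightarrow> (real \<Rightarrow> real) \<Rightarrow> sfield set"
  for \<Omega> :: "point set" and \<alpha> :: "real \<Rightarrow> real" where
  const: "(\<lambda>t x y z. c) \<in> elementary \<Omega> \<alpha>"
| coordinate: "(\<lambda>t x y z. coord j (t, x, y, z)) \<in> elementary \<Omega> \<alpha>"
| profile: "(\<lambda>t x y z. (deriv ^^ n) \<alpha> t) \<in> elementary \<Omega> \<alpha>"
| add: "f \<in> elementary \<Omega> \<alpha> \<Longrightarrow> g \<in> elementary \<Omega> \<alpha> \<Longrightarrow>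
    (\<lambda>t x y z. f t x y z + g t x y z) \<in> elementary \<Omega> \<alpha>"
| mult: "f \<in> elementary \<Omega> \<alpha> \<Longrightarrow> g \<in> elementary \<Omega> \<alpha> \<Longrightarrow>
    (\<lambda>t x y z. f t x y z * g t x y z) \<in> elementary \<Omega> \<alpha>"
| inverse: "f \<in> elementary \<Omega> \<alpha> \<Longrightarrow> \<forall>q\<in>\<Omega>. uncurry4 f q \<noteq> 0 \<Longrightarrow>
    (\<lambda>t x y z. inverse (f t x y z)) \<in> elementary \<Omega> \<alpha>"
| sin: "f \<in> elementary \<Omega> \<alpha> \<Longrightarrow> (\<lambda>t x y z. sin (f t x y z)) \<in> elementary \<Omega> \<alpha>"
| cos: "f \<in> elementary \<Omega> \<alpha> \<Longrightarrow> (\<lambda>t x y z. cos (f t x y z)) \<in> elementary \<Omega> \<alpha>"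
| agree: "g \<in> elementary \<Omega> \<alpha> \<Longrightarrow> \<forall>q\<in>\<Omega>. uncurry4 f q = uncurry4 g q \<Longrightarrow>
    f \<in> elementary \<Omega> \<alpha>"

lemma elementary_diff:
  assumes "f \<in> elementary \<Omega> \<alpha>" and "g \<in> elementary \<Omega> \<alpha>"
  shows "(\<lambda>t x y z. f t x y z - g t x y z) \<in> elementary \<Omega> \<alpha>"
proof -
  have "(\<lambda>t x y z. f t x y z + (- 1) * g t x y z) \<in> elementary \<Omega> \<alpha>"
    using assms by (intro elementary.add elementary.mult elementary.const)
  then show ?thesis by (rule elementary.agree) simp
qed

lemma elementary_uminus:
  assumes "f \<in> elementary \<Omega> \<alpha>"
  shows "(\<lambda>t x y z. - f t x y z) \<in> elementary \<Omega> \<alpha>"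
proof -
  have "(\<lambda>t x y z. (- 1) * f t x y z) \<in> elementary \<Omega> \<alpha>"
    using assms by (intro elementary.mult elementary.const)
  then show ?thesis by (rule elementary.agree) simp
qed

lemma elementary_divide:
  assumes "f \<in> elementary \<Omega> \<alpha>" and "g \<in> elementary \<Omega> \<alpha>" and "\<forall>q\<in>\<Omega>. uncurry4 g q \<noteq> 0"
  shows "(\<lambda>t x y z. f t x y z / g t x y z) \<in> elementary \<Omega> \<alpha>"
proof -
  have "(\<lambda>t x y z. f t x y z * inverse (g t x y z)) \<in> elementary \<Omega> \<alpha>"
    using assms by (intro elementary.mult elementary.inverse)
  then show ?thesis by (rule elementary.agree) (simp add: divide_inverse)
qed

lemma elementary_power:
  "f \<in> elementary \<Omega> \<alpha> \<Longrightarrow> (\<lambda>t x y z. f t x y z ^ n) \<in> elementary \<Omega> \<alpha>"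
  by (induction n) (simp_all add: elementary.const elementary.mult)

lemma elementary_coordinates:
  "(\<lambda>t x y z. x) \<in> elementary \<Omega> \<alpha>" "(\<lambda>t x y z. y) \<in> elementary \<Omega> \<alpha>"
  "(\<lambda>t x y z. z) \<in> elementary \<Omega> \<alpha>"
  using elementary.coordinate[of 1] elementary.coordinate[of 2] elementary.coordinate[of 3]
  by (simp_all add: coord_def)

lemma elementary_profiles:
  "(\<lambda>t x y z. \<alpha> t) \<in> elementary \<Omega> \<alpha>" "(\<lambda>t x y z. deriv \<alpha> t) \<in> elementary \<Omega> \<alpha>"
  "(\<lambda>t x y z. deriv (deriv \<alpha>) t) \<in> elementary \<Omega> \<alpha>"
  "(\<lambda>t x y z. deriv (deriv (deriv \<alpha>)) t) \<in> elementary \<Omega> \<alpha>"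
  using elementary.profile[where n = 0] elementary.profile[where n = 1]
    elementary.profile[where n = 2] elementary.profile[where n = 3]
  by (simp_all add: numeral_2_eq_2 numeral_3_eq_3)

lemmas elementary_intros = elementary.const elementary_coordinates elementary_profiles
  elementary.add elementary_diff elementary.mult elementary_uminus elementary_power
  elementary.sin elementary.cos

lemma elementary_step:
  assumes cont: "continuous_on \<Omega> (uncurry4 h)"
    and d: "\<And>i. d i \<in> elementary \<Omega> \<alpha>"
    and h: "\<And>q i. q \<in> \<Omega> \<Longrightarrow> DERIV (slice h i q) (coord i q) :> uncurry4 (d i) q"
  shows "regular \<Omega> h \<and> (\<forall>i. pd i h \<in> elementary \<Omega> \<alpha>)"
proof
  show "regular \<Omega> h"
    unfolding regular_def real_differentiable_def using cont h by blast
  have "uncurry4 (pd i h) q = uncurry4 (d i) q" if "q \<in> \<Omega>" for i q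
    using h[OF that] by (simp add: pd_as_slice DERIV_imp_deriv)
  then show "\<forall>i. pd i h \<in> elementary \<Omega> \<alpha>"
    using d elementary.agree by blast
qed

lemma elementary_coordinate_step:
  "regular \<Omega> (\<lambda>t x y z. coord j (t, x, y, z)) \<and>
   (\<forall>i. pd i (\<lambda>t x y z. coord j (t, x, y, z)) \<in> elementary \<Omega> \<alpha>)"
proof (rule elementary_step)
  show "continuous_on \<Omega> (uncurry4 (\<lambda>t x y z. coord j (t, x, y, z)))"
    by (simp add: continuous_on_coord)
  fix q i
  have "slice (\<lambda>t x y z. coord j (t, x, y, z)) i q = (\<lambda>s. if min j 3 = min i 3 then s else coord j q)"
    by (simp add: slice_def coord_move)
  then show "DERIV (slice (\<lambda>t x y z. coord j (t, x, y, z)) i q) (coord i q)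
      :> uncurry4 (\<lambda>t x y z. if min j 3 = min i 3 then 1 else 0) q"
    by (cases q) auto
qed (rule elementary.const)

lemma elementary_profile_step:
  assumes "\<forall>q\<in>\<Omega>. \<forall>n. (deriv ^^ n) \<alpha> differentiable at (coord 0 q)"
  shows "regular \<Omega> (\<lambda>t x y z. (deriv ^^ n) \<alpha> t) \<and>
    (\<forall>i. pd i (\<lambda>t x y z. (deriv ^^ n) \<alpha> t) \<in> elementary \<Omega> \<alpha>)"
proof (rule elementary_step)
  let ?d = "\<lambda>i t x y z. if i = 0 then (deriv ^^ Suc n) \<alpha> t else 0"
  have "uncurry4 (\<lambda>t x y z. (deriv ^^ n) \<alpha> t) = (\<lambda>q. (deriv ^^ n) \<alpha> (coord 0 q))"
    by (auto simp: fun_eq_iff uncurry4_def coord_def)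
  moreover have "isCont (\<lambda>q. (deriv ^^ n) \<alpha> (coord 0 q)) q" if "q \<in> \<Omega>" for q
  proof (rule isCont_o2[where f = "coord 0" and g = "(deriv ^^ n) \<alpha>"])
    show "isCont (coord 0) q"
      using continuous_on_coord[of UNIV 0] continuous_on_eq_continuous_at by blast
    show "isCont ((deriv ^^ n) \<alpha>) (coord 0 q)"
      using assms that by (blast intro: differentiable_imp_continuous_within)
  qed
  ultimately show "continuous_on \<Omega> (uncurry4 (\<lambda>t x y z. (deriv ^^ n) \<alpha> t))"
    by (simp add: continuous_at_imp_continuous_on)
  show "?d i \<in> elementary \<Omega> \<alpha>" for i
    using elementary.profile[where n = "Suc n"] elementary.const[of 0] by (cases "i = 0") simp_all
  fix q i assume "q \<in> \<Omega>"
  show "DERIV (slice (\<lambda>t x y z. (deriv ^^ n) \<alpha> t) i q) (coord i q) :> uncurry4 (?d i) q"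
  proof (cases "i = 0")
    case True
    then have "slice (\<lambda>t x y z. (deriv ^^ n) \<alpha> t) i q = (deriv ^^ n) \<alpha>"
      by (cases q) (simp add: slice_def move_def fun_eq_iff)
    then show ?thesis
      using True assms \<open>q \<in> \<Omega>\<close> by (cases q) (auto simp: DERIV_deriv_iff_real_differentiable coord_def)
  next
    case False
    then have "slice (\<lambda>t x y z. (deriv ^^ n) \<alpha> t) i q = (\<lambda>s. (deriv ^^ n) \<alpha> (coord 0 q))"
      by (cases q) (simp add: slice_def move_def coord_def fun_eq_iff)
    then show ?thesis
      using False by (cases q) simp
  qed
qed

lemma uncurry4_compose: "uncurry4 (\<lambda>t x y z. \<phi> (f t x y z)) = \<phi> \<circ> uncurry4 f"
  by (auto simp: uncurry4_def fun_eq_iff)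

lemma elementary_sum_product_step:
  assumes f: "regular \<Omega> f" "f \<in> elementary \<Omega> \<alpha>" "\<forall>i. pd i f \<in> elementary \<Omega> \<alpha>"
    and g: "regular \<Omega> g" "g \<in> elementary \<Omega> \<alpha>" "\<forall>i. pd i g \<in> elementary \<Omega> \<alpha>"
  shows "regular \<Omega> (\<lambda>t x y z. f t x y z + g t x y z) \<and>
      (\<forall>i. pd i (\<lambda>t x y z. f t x y z + g t x y z) \<in> elementary \<Omega> \<alpha>)"
    and "regular \<Omega> (\<lambda>t x y z. f t x y z * g t x y z) \<and>
      (\<forall>i. pd i (\<lambda>t x y z. f t x y z * g t x y z) \<in> elementary \<Omega> \<alpha>)"
proof -
  have slices: "slice (\<lambda>t x y z. f t x y z + g t x y z) i q = (\<lambda>s. slice f i q s + slice g i q s)"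
    "slice (\<lambda>t x y z. f t x y z * g t x y z) i q = (\<lambda>s. slice f i q s * slice g i q s)" for i q
    by (simp_all add: slice_def)
  show "regular \<Omega> (\<lambda>t x y z. f t x y z + g t x y z) \<and>
      (\<forall>i. pd i (\<lambda>t x y z. f t x y z + g t x y z) \<in> elementary \<Omega> \<alpha>)"
    using f g regular_slice_DERIV[OF f(1)] regular_slice_DERIV[OF g(1)]
    by (intro elementary_step[where d = "\<lambda>i t x y z. pd i f t x y z + pd i g t x y z"])
      (auto simp: regular_def slices intro!: continuous_intros derivative_eq_intros elementary.add)
  show "regular \<Omega> (\<lambda>t x y z. f t x y z * g t x y z) \<and>
      (\<forall>i. pd i (\<lambda>t x y z. f t x y z * g t x y z) \<in> elementary \<Omega> \<alpha>)"
    using f g regular_slice_DERIV[OF f(1)] regular_slice_DERIV[OF g(1)]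
    by (intro elementary_step[where d = "\<lambda>i t x y z. pd i f t x y z * g t x y z + f t x y z * pd i g t x y z"])
      (auto simp: regular_def slices mult.commute intro!: continuous_intros derivative_eq_intros
        elementary.add elementary.mult)
qed

lemma elementary_compose_step:
  assumes f: "regular \<Omega> f" "\<forall>i. pd i f \<in> elementary \<Omega> \<alpha>"
    and \<phi>': "(\<lambda>t x y z. \<phi>' (f t x y z)) \<in> elementary \<Omega> \<alpha>"
    and \<phi>: "\<And>q. q \<in> \<Omega> \<Longrightarrow> DERIV \<phi> (uncurry4 f q) :> \<phi>' (uncurry4 f q)"
  shows "regular \<Omega> (\<lambda>t x y z. \<phi> (f t x y z)) \<and> (\<forall>i. pd i (\<lambda>t x y z. \<phi> (f t x y z)) \<in> elementary \<Omega> \<alpha>)"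
proof (rule elementary_step[where d = "\<lambda>i t x y z. \<phi>' (f t x y z) * pd i f t x y z"])
  have "continuous_on (uncurry4 f ` \<Omega>) \<phi>"
    using \<phi> by (auto intro!: continuous_at_imp_continuous_on DERIV_isCont)
  then show "continuous_on \<Omega> (uncurry4 (\<lambda>t x y z. \<phi> (f t x y z)))"
    using f(1) unfolding uncurry4_compose regular_def by (blast intro: continuous_on_compose)
  show "(\<lambda>t x y z. \<phi>' (f t x y z) * pd i f t x y z) \<in> elementary \<Omega> \<alpha>" for i
    using f(2) \<phi>' by (simp add: elementary.mult)
  fix q i assume q: "q \<in> \<Omega>"
  have "slice (\<lambda>t x y z. \<phi> (f t x y z)) i q = (\<lambda>s. \<phi> (slice f i q s))"
    by (simp add: slice_def uncurry4_compose)
  then show "DERIV (slice (\<lambda>t x y z. \<phi> (f t x y z)) i q) (coord i q)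
      :> uncurry4 (\<lambda>t x y z. \<phi>' (f t x y z) * pd i f t x y z) q"
    using DERIV_chain2[OF _ regular_slice_DERIV[OF f(1) q], of \<phi>] \<phi>[OF q] by (simp add: uncurry4_compose)
qed

lemma elementary_agree_step:
  assumes "open \<Omega>" and agree: "\<forall>q\<in>\<Omega>. uncurry4 f q = uncurry4 g q"
    and g: "regular \<Omega> g" "\<forall>i. pd i g \<in> elementary \<Omega> \<alpha>"
  shows "regular \<Omega> f \<and> (\<forall>i. pd i f \<in> elementary \<Omega> \<alpha>)"
proof (rule elementary_step[where d = "\<lambda>i. pd i g"])
  show "continuous_on \<Omega> (uncurry4 f)"
    using agree g(1) continuous_on_cong[of \<Omega> \<Omega> "uncurry4 f" "uncurry4 g"] by (simp add: regular_def)
  show "pd i g \<in> elementary \<Omega> \<alpha>" for i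
    using g(2) by blast
  fix q i assume q: "q \<in> \<Omega>"
  have "\<forall>\<^sub>F s in nhds (coord i q). slice f i q s = slice g i q s"
    using eventually_move_in[OF \<open>open \<Omega>\<close> q, of i] unfolding slice_def
    by (rule eventually_mono) (use agree in blast)
  then show "DERIV (slice f i q) (coord i q) :> uncurry4 (pd i g) q"
    using regular_slice_DERIV[OF g(1) q] DERIV_cong_ev[OF refl _ refl] by blast
qed

lemma elementary_regular:
  assumes "open \<Omega>" and \<alpha>: "\<forall>q\<in>\<Omega>. \<forall>n. (deriv ^^ n) \<alpha> differentiable at (coord 0 q)"
  shows "f \<in> elementary \<Omega> \<alpha> \<Longrightarrow> regular \<Omega> f \<and> (\<forall>i. pd i f \<in> elementary \<Omega> \<alpha>)"
proof (induction rule: elementary.induct)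
  case (const c)
  show ?case
    by (rule elementary_step[where d = "\<lambda>i t x y z. 0"]) (simp_all add: slice_def elementary.const)
next
  case (coordinate j)
  show ?case by (rule elementary_coordinate_step)
next
  case (profile n)
  show ?case by (rule elementary_profile_step[OF \<alpha>])
next
  case (add f g)
  then show ?case by (intro elementary_sum_product_step(1)) auto
next
  case (mult f g)
  then show ?case by (intro elementary_sum_product_step(2)) auto
next
  case (inverse f)
  have "(\<lambda>t x y z. - (inverse (f t x y z) * inverse (f t x y z))) \<in> elementary \<Omega> \<alpha>"
    using inverse.hyps by (intro elementary_uminus elementary.mult elementary.inverse)
  then show ?case
    using inverse by (intro elementary_compose_step) (auto intro!: derivative_eq_intros simp: power2_eq_square)
next
  case (sin f)
  then show ?case
    by (intro elementary_compose_step[where \<phi>' = cos] elementary.cos) (auto intro!: derivative_eq_intros)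
next
  case (cos f)
  then show ?case
    by (intro elementary_compose_step[where \<phi>' = "\<lambda>x. - sin x"] elementary_uminus elementary.sin)
      (auto intro!: derivative_eq_intros)
next
  case (agree g f)
  then show ?case by (intro elementary_agree_step[OF \<open>open \<Omega>\<close>]) auto
qed

lemma elementary_smooth4:
  assumes "open \<Omega>" and "\<forall>q\<in>\<Omega>. \<forall>n. (deriv ^^ n) \<alpha> differentiable at (coord 0 q)"
    and "f \<in> elementary \<Omega> \<alpha>"
  shows "smooth4 \<Omega> f"
  by (rule smooth4_if_closed[where S = "elementary \<Omega> \<alpha>"])
    (use elementary_regular[OF assms(1,2)] assms(3) in auto)

lemma pd_local:
  assumes "open \<Omega>" and "\<And>t x y z. (t, x, y, z) \<in> \<Omega> \<Longrightarrow> f t x y z = g t x y z"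
    and q: "(t, x, y, z) \<in> \<Omega>"
  shows "pd i f t x y z = pd i g t x y z"
proof -
  have "\<forall>\<^sub>F s in nhds (coord i (t, x, y, z)). slice f i (t, x, y, z) s = slice g i (t, x, y, z) s"
    using eventually_move_in[OF assms(1) q, of i] unfolding slice_def
    by (rule eventually_mono) (use assms(2) in \<open>auto simp: uncurry4_def split: prod.split\<close>)
  then have "deriv (slice f i (t, x, y, z)) (coord i (t, x, y, z))
      = deriv (slice g i (t, x, y, z)) (coord i (t, x, y, z))"
    by (rule deriv_cong_ev) simp
  then show ?thesis
    using pd_as_slice[of i f "(t, x, y, z)"] pd_as_slice[of i g "(t, x, y, z)"] by simp
qed

lemma pd_product_difference:
  assumes "regular \<Omega> f" "regular \<Omega> g" "regular \<Omega> h" "regular \<Omega> k" and "(t, x, y, z) \<in> \<Omega>"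
  shows "pd i (\<lambda>t x y z. f t x y z * g t x y z - h t x y z * k t x y z) t x y z =
    pd i f t x y z * g t x y z + f t x y z * pd i g t x y z
    - (pd i h t x y z * k t x y z + h t x y z * pd i k t x y z)"
proof -
  let ?q = "(t, x, y, z)"
  have "slice (\<lambda>t x y z. f t x y z * g t x y z - h t x y z * k t x y z) i ?q
      = (\<lambda>s. slice f i ?q s * slice g i ?q s - slice h i ?q s * slice k i ?q s)"
    by (simp add: slice_def)
  moreover have "DERIV (\<lambda>s. slice f i ?q s * slice g i ?q s - slice h i ?q s * slice k i ?q s) (coord i ?q)
      :> pd i f t x y z * g t x y z + f t x y z * pd i g t x y z
         - (pd i h t x y z * k t x y z + h t x y z * pd i k t x y z)"
    using assms regular_slice_DERIV[of \<Omega> _ ?q i] by (auto intro!: derivative_eq_intros)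
  ultimately show ?thesis
    using pd_as_slice[of i _ ?q] DERIV_imp_deriv by fastforce
qed

lemma pd_indices: "pdt = pd 0" "pdx = pd 1" "pdy = pd 2" "pdz = pd 3"
  by (simp_all add: pd_def fun_eq_iff)

lemma curl_cross_product:
  assumes "regular \<Omega> A1" "regular \<Omega> A2" "regular \<Omega> A3" "regular \<Omega> B1" "regular \<Omega> B2" "regular \<Omega> B3"
    and q: "(t, x, y, z) \<in> \<Omega>"
  shows "rot1 (cr1 A1 A2 A3 B1 B2 B3) (cr2 A1 A2 A3 B1 B2 B3) (cr3 A1 A2 A3 B1 B2 B3) t x y z =
      pdy A1 t x y z * B2 t x y z + A1 t x y z * pdy B2 t x y z
      - (pdy A2 t x y z * B1 t x y z + A2 t x y z * pdy B1 t x y z)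
      - (pdz A3 t x y z * B1 t x y z + A3 t x y z * pdz B1 t x y z
         - (pdz A1 t x y z * B3 t x y z + A1 t x y z * pdz B3 t x y z))"
    and "rot2 (cr1 A1 A2 A3 B1 B2 B3) (cr2 A1 A2 A3 B1 B2 B3) (cr3 A1 A2 A3 B1 B2 B3) t x y z =
      pdz A2 t x y z * B3 t x y z + A2 t x y z * pdz B3 t x y z
      - (pdz A3 t x y z * B2 t x y z + A3 t x y z * pdz B2 t x y z)
      - (pdx A1 t x y z * B2 t x y z + A1 t x y z * pdx B2 t x y z
         - (pdx A2 t x y z * B1 t x y z + A2 t x y z * pdx B1 t x y z))"
    and "rot3 (cr1 A1 A2 A3 B1 B2 B3) (cr2 A1 A2 A3 B1 B2 B3) (cr3 A1 A2 A3 B1 B2 B3) t x y z =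
      pdx A3 t x y z * B1 t x y z + A3 t x y z * pdx B1 t x y z
      - (pdx A1 t x y z * B3 t x y z + A1 t x y z * pdx B3 t x y z)
      - (pdy A2 t x y z * B3 t x y z + A2 t x y z * pdy B3 t x y z
         - (pdy A3 t x y z * B2 t x y z + A3 t x y z * pdy B2 t x y z))"
  unfolding rot1_def rot2_def rot3_def cr1_def cr2_def cr3_def pd_indices
  by (simp_all only: pd_product_difference[OF _ _ _ _ q] assms(1-6))

lemma pd_eqI:
  "DERIV (\<lambda>s. f s x y z) t :> D \<Longrightarrow> pdt f t x y z = D"
  "DERIV (\<lambda>s. f t s y z) x :> D \<Longrightarrow> pdx f t x y z = D"
  "DERIV (\<lambda>s. f t x s z) y :> D \<Longrightarrow> pdy f t x y z = D"
  "DERIV (\<lambda>s. f t x y s) z :> D \<Longrightarrow> pdz f t x y z = D"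
  by (simp_all add: pdt_def pdx_def pdy_def pdz_def DERIV_imp_deriv)

lemma pd_time_only [simp]:
  "pdx (\<lambda>t x y z. h t) = (\<lambda>t x y z. 0)" "pdy (\<lambda>t x y z. h t) = (\<lambda>t x y z. 0)"
  "pdz (\<lambda>t x y z. h t) = (\<lambda>t x y z. 0)"
  by (simp_all add: pdx_def pdy_def pdz_def)

(* The setting of the theorem: a smooth profile alpha on an open set I with alpha' nonzero. *)
locale rotating_flow =
  fixes \<alpha> :: "real \<Rightarrow> real" and I :: "real set" and \<nu> \<mu> \<rho> a b :: real
  assumes open_I: "open I" and smooth_\<alpha>: "smooth1 I \<alpha>"
    and \<alpha>'_nonzero: "\<forall>t\<in>I. deriv \<alpha> t \<noteq> 0" and \<rho>_nonzero: "\<rho> \<noteq> 0"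
begin

definition \<kappa> :: "real \<Rightarrow> real" where
  "\<kappa> t = deriv (deriv \<alpha>) t / (2 * deriv \<alpha> t) + \<mu> * a * b / (4 * deriv \<alpha> t)"

definition \<kappa>' :: "real \<Rightarrow> real" where
  "\<kappa>' t = deriv (deriv (deriv \<alpha>)) t / (2 * deriv \<alpha> t)
     - (deriv (deriv \<alpha>) t)\<^sup>2 / (2 * (deriv \<alpha> t)\<^sup>2) - \<mu> * a * b * deriv (deriv \<alpha>) t / (4 * (deriv \<alpha> t)\<^sup>2)"

definition X :: sfield where "X = (\<lambda>t x y z. x * cos (\<alpha> t) + y * sin (\<alpha> t))"
definition Y :: sfield where "Y = (\<lambda>t x y z. - x * sin (\<alpha> t) + y * cos (\<alpha> t))"

definition \<Omega> :: "point set" where "\<Omega> = {(t, x, y, z). t \<in> I \<and> X t x y z \<noteq> 0}"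

definition u :: sfield where
  "u = (\<lambda>t x y z. - \<kappa> t * x - deriv \<alpha> t * y - 6 * \<nu> * cos (\<alpha> t) / X t x y z
                 + 6 * \<nu> * sin (\<alpha> t) * Y t x y z / (X t x y z)\<^sup>2)"
definition v :: sfield where
  "v = (\<lambda>t x y z. deriv \<alpha> t * x - \<kappa> t * y - 6 * \<nu> * sin (\<alpha> t) / X t x y z
                 - 6 * \<nu> * cos (\<alpha> t) * Y t x y z / (X t x y z)\<^sup>2)"
definition w :: sfield where "w = (\<lambda>t x y z. 2 * \<kappa> t * z)"
definition H1 :: sfield where "H1 = (\<lambda>t x y z. - (a * X t x y z + b * Y t x y z) * sin (\<alpha> t))"
definition H2 :: sfield where "H2 = (\<lambda>t x y z. (a * X t x y z + b * Y t x y z) * cos (\<alpha> t))"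
definition H3 :: sfield where "H3 = (\<lambda>t x y z. - b * z)"

definition p :: sfield where
  "p = (\<lambda>t x y z. \<rho> * (- 12 * \<nu>\<^sup>2 / (X t x y z)\<^sup>2
     + ((deriv \<alpha> t)\<^sup>2 + \<kappa>' t - (\<kappa> t)\<^sup>2 + \<mu> * a\<^sup>2) * (X t x y z)\<^sup>2 / 2
     + ((deriv \<alpha> t)\<^sup>2 + \<kappa>' t - (\<kappa> t)\<^sup>2) * (Y t x y z)\<^sup>2 / 2
     + \<mu> * a * b * X t x y z * Y t x y z / 2 + 12 * \<nu> * deriv \<alpha> t * Y t x y z / X t x y z
     - (\<kappa>' t + 2 * (\<kappa> t)\<^sup>2) * z\<^sup>2))"

(* The first spatial derivatives of u and v, as fields, needed to take second derivatives. *)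
definition ux :: sfield where
  "ux = (\<lambda>t x y z. - \<kappa> t + 6 * \<nu> * ((cos (\<alpha> t))\<^sup>2 - (sin (\<alpha> t))\<^sup>2) / (X t x y z)\<^sup>2
                  - 12 * \<nu> * sin (\<alpha> t) * cos (\<alpha> t) * Y t x y z / (X t x y z) ^ 3)"
definition uy :: sfield where
  "uy = (\<lambda>t x y z. - deriv \<alpha> t + 12 * \<nu> * sin (\<alpha> t) * cos (\<alpha> t) / (X t x y z)\<^sup>2
                  - 12 * \<nu> * (sin (\<alpha> t))\<^sup>2 * Y t x y z / (X t x y z) ^ 3)"
definition vx :: sfield where
  "vx = (\<lambda>t x y z. deriv \<alpha> t + 12 * \<nu> * sin (\<alpha> t) * cos (\<alpha> t) / (X t x y z)\<^sup>2
                  + 12 * \<nu> * (cos (\<alpha> t))\<^sup>2 * Y t x y z / (X t x y z) ^ 3)"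
definition vy :: sfield where
  "vy = (\<lambda>t x y z. - \<kappa> t + 6 * \<nu> * ((sin (\<alpha> t))\<^sup>2 - (cos (\<alpha> t))\<^sup>2) / (X t x y z)\<^sup>2
                  + 12 * \<nu> * sin (\<alpha> t) * cos (\<alpha> t) * Y t x y z / (X t x y z) ^ 3)"

lemma \<Omega>_memberD:
  assumes "(t, x, y, z) \<in> \<Omega>"
  shows "t \<in> I" and "X t x y z \<noteq> 0"
  using assms by (simp_all add: \<Omega>_def)

lemma profile_DERIV:
  assumes "t \<in> I"
  shows "DERIV \<alpha> t :> deriv \<alpha> t" and "DERIV (deriv \<alpha>) t :> deriv (deriv \<alpha>) t"
    and "DERIV (deriv (deriv \<alpha>)) t :> deriv (deriv (deriv \<alpha>)) t"
proof -
  have "(deriv ^^ n) \<alpha> differentiable at t" for n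
    using smooth_\<alpha> assms by (simp add: smooth1_def)
  from this[of 0] this[of 1] this[of 2] show
    "DERIV \<alpha> t :> deriv \<alpha> t" "DERIV (deriv \<alpha>) t :> deriv (deriv \<alpha>) t"
    "DERIV (deriv (deriv \<alpha>)) t :> deriv (deriv (deriv \<alpha>)) t"
    by (simp_all add: DERIV_deriv_iff_real_differentiable numeral_2_eq_2)
qed

lemma \<kappa>_DERIV:
  assumes "t \<in> I"
  shows "DERIV \<kappa> t :> \<kappa>' t"
proof -
  have nz: "deriv \<alpha> t \<noteq> 0" using \<alpha>'_nonzero assms by blast
  have "DERIV (\<lambda>s. deriv (deriv \<alpha>) s / (2 * deriv \<alpha> s) + \<mu> * a * b / (4 * deriv \<alpha> s)) t :> \<kappa>' t"
    using nz by (auto intro!: derivative_eq_intros profile_DERIV[OF assms]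
        simp: \<kappa>'_def field_simps power2_eq_square)
  then show ?thesis
    by (simp add: \<kappa>_def[abs_def])
qed

lemma \<kappa>_relation: "t \<in> I \<Longrightarrow> \<kappa> t * deriv \<alpha> t = deriv (deriv \<alpha>) t / 2 + \<mu> * a * b / 4"
  using \<alpha>'_nonzero by (auto simp: \<kappa>_def field_simps)

lemma frame_DERIV:
  "DERIV (\<lambda>s. X t s y z) x :> cos (\<alpha> t)" "DERIV (\<lambda>s. X t x s z) y :> sin (\<alpha> t)"
  "DERIV (\<lambda>s. X t x y s) z :> 0"
  "DERIV (\<lambda>s. Y t s y z) x :> - sin (\<alpha> t)" "DERIV (\<lambda>s. Y t x s z) y :> cos (\<alpha> t)"
  "DERIV (\<lambda>s. Y t x y s) z :> 0"
  by (auto simp: X_def Y_def intro!: derivative_eq_intros)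

lemma frame_DERIV_time:
  assumes "t \<in> I"
  shows "DERIV (\<lambda>s. X s x y z) t :> deriv \<alpha> t * Y t x y z"
    and "DERIV (\<lambda>s. Y s x y z) t :> - deriv \<alpha> t * X t x y z"
  by (auto simp: X_def Y_def algebra_simps intro!: derivative_eq_intros profile_DERIV[OF assms])

lemma frame_inverse:
  "cos (\<alpha> t) * X t x y z - sin (\<alpha> t) * Y t x y z = x"
  "sin (\<alpha> t) * X t x y z + cos (\<alpha> t) * Y t x y z = y"
  by (simp_all add: X_def Y_def algebra_simps flip: distrib_left power2_eq_square)

lemmas field_DERIV = derivative_eq_intros frame_DERIV frame_DERIV_time \<kappa>_DERIV profile_DERIV
lemmas fraction_simps = field_simps power2_eq_square power3_eq_cube power4_eq_xxxx

(* The velocity in the rotating frame: a rotation of a field that depends only on X and Y. *)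
lemma velocity_in_frame:
  assumes "X t x y z \<noteq> 0"
  shows "u t x y z = cos (\<alpha> t) * (- \<kappa> t * X t x y z - deriv \<alpha> t * Y t x y z - 6 * \<nu> / X t x y z)
           - sin (\<alpha> t) * (deriv \<alpha> t * X t x y z - \<kappa> t * Y t x y z - 6 * \<nu> * Y t x y z / (X t x y z)\<^sup>2)"
    (is "_ = ?u")
    and "v t x y z = sin (\<alpha> t) * (- \<kappa> t * X t x y z - deriv \<alpha> t * Y t x y z - 6 * \<nu> / X t x y z)
           + cos (\<alpha> t) * (deriv \<alpha> t * X t x y z - \<kappa> t * Y t x y z - 6 * \<nu> * Y t x y z / (X t x y z)\<^sup>2)"
    (is "_ = ?v")
proof -
  have "u t x y z = - \<kappa> t * (cos (\<alpha> t) * X t x y z - sin (\<alpha> t) * Y t x y z)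
      - deriv \<alpha> t * (sin (\<alpha> t) * X t x y z + cos (\<alpha> t) * Y t x y z)
      - 6 * \<nu> * cos (\<alpha> t) / X t x y z + 6 * \<nu> * sin (\<alpha> t) * Y t x y z / (X t x y z)\<^sup>2"
    unfolding frame_inverse by (simp add: u_def)
  also have "\<dots> = ?u"
    using assms by (simp add: fraction_simps)
  finally show "u t x y z = ?u" .
  have "v t x y z = deriv \<alpha> t * (cos (\<alpha> t) * X t x y z - sin (\<alpha> t) * Y t x y z)
      - \<kappa> t * (sin (\<alpha> t) * X t x y z + cos (\<alpha> t) * Y t x y z)
      - 6 * \<nu> * sin (\<alpha> t) / X t x y z - 6 * \<nu> * cos (\<alpha> t) * Y t x y z / (X t x y z)\<^sup>2"
    unfolding frame_inverse by (simp add: v_def)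
  also have "\<dots> = ?v"
    using assms by (simp add: fraction_simps)
  finally show "v t x y z = ?v" .
qed

lemma u_derivatives:
  assumes "(t, x, y, z) \<in> \<Omega>"
  shows "pdx u t x y z = ux t x y z" and "pdy u t x y z = uy t x y z"
    and "pdt u t x y z = - \<kappa>' t * (cos (\<alpha> t) * X t x y z - sin (\<alpha> t) * Y t x y z)
      - deriv (deriv \<alpha>) t * (sin (\<alpha> t) * X t x y z + cos (\<alpha> t) * Y t x y z)
      + 12 * \<nu> * deriv \<alpha> t * (cos (\<alpha> t) * Y t x y z / (X t x y z)\<^sup>2
                                - sin (\<alpha> t) * (Y t x y z)\<^sup>2 / (X t x y z) ^ 3)"
  using \<Omega>_memberD[OF assms] unfolding u_def ux_def uy_def frame_inverse
  by (intro pd_eqI; auto intro!: field_DERIV simp: fraction_simps)+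

lemma v_derivatives:
  assumes "(t, x, y, z) \<in> \<Omega>"
  shows "pdx v t x y z = vx t x y z" and "pdy v t x y z = vy t x y z"
    and "pdt v t x y z = deriv (deriv \<alpha>) t * (cos (\<alpha> t) * X t x y z - sin (\<alpha> t) * Y t x y z)
      - \<kappa>' t * (sin (\<alpha> t) * X t x y z + cos (\<alpha> t) * Y t x y z)
      + 12 * \<nu> * deriv \<alpha> t * (sin (\<alpha> t) * Y t x y z / (X t x y z)\<^sup>2
                                + cos (\<alpha> t) * (Y t x y z)\<^sup>2 / (X t x y z) ^ 3)"
  using \<Omega>_memberD[OF assms] unfolding v_def vx_def vy_def frame_inverse
  by (intro pd_eqI; auto intro!: field_DERIV simp: fraction_simps)+

lemma trivial_derivative_fields:
  "pdz u = (\<lambda>t x y z. 0)" "pdz v = (\<lambda>t x y z. 0)" "pdx w = (\<lambda>t x y z. 0)" "pdy w = (\<lambda>t x y z. 0)"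
  "pdz H1 = (\<lambda>t x y z. 0)" "pdz H2 = (\<lambda>t x y z. 0)"
  "pdt H3 = (\<lambda>t x y z. 0)" "pdx H3 = (\<lambda>t x y z. 0)" "pdy H3 = (\<lambda>t x y z. 0)"
  by (simp_all add: pdt_def pdx_def pdy_def pdz_def u_def v_def w_def H1_def H2_def H3_def X_def Y_def)

lemma linear_derivative_fields:
  "pdz w = (\<lambda>t x y z. 2 * \<kappa> t)" "pdz H3 = (\<lambda>t x y z. - b)"
  "pdx H1 = (\<lambda>t x y z. - (a * cos (\<alpha> t) - b * sin (\<alpha> t)) * sin (\<alpha> t))"
  "pdy H1 = (\<lambda>t x y z. - (a * sin (\<alpha> t) + b * cos (\<alpha> t)) * sin (\<alpha> t))"
  "pdx H2 = (\<lambda>t x y z. (a * cos (\<alpha> t) - b * sin (\<alpha> t)) * cos (\<alpha> t))"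
  "pdy H2 = (\<lambda>t x y z. (a * sin (\<alpha> t) + b * cos (\<alpha> t)) * cos (\<alpha> t))"
  unfolding w_def H1_def H2_def H3_def
  by (intro ext pd_eqI; auto intro!: field_DERIV simp: algebra_simps)+

lemma time_derivatives:
  assumes "t \<in> I"
  shows "pdt w t x y z = 2 * \<kappa>' t * z"
    and "pdt H1 t x y z = - (a * deriv \<alpha> t * Y t x y z - b * deriv \<alpha> t * X t x y z) * sin (\<alpha> t)
                          - (a * X t x y z + b * Y t x y z) * cos (\<alpha> t) * deriv \<alpha> t"
    and "pdt H2 t x y z = (a * deriv \<alpha> t * Y t x y z - b * deriv \<alpha> t * X t x y z) * cos (\<alpha> t)
                          - (a * X t x y z + b * Y t x y z) * sin (\<alpha> t) * deriv \<alpha> t"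
  using assms unfolding w_def H1_def H2_def
  by (intro pd_eqI; auto intro!: field_DERIV simp: algebra_simps)+

lemma pressure_derivatives:
  assumes "(t, x, y, z) \<in> \<Omega>"
  shows "pdx p t x y z = \<rho> * (24 * \<nu>\<^sup>2 * cos (\<alpha> t) / (X t x y z) ^ 3
      + ((deriv \<alpha> t)\<^sup>2 + \<kappa>' t - (\<kappa> t)\<^sup>2 + \<mu> * a\<^sup>2) * X t x y z * cos (\<alpha> t)
      - ((deriv \<alpha> t)\<^sup>2 + \<kappa>' t - (\<kappa> t)\<^sup>2) * Y t x y z * sin (\<alpha> t)
      + \<mu> * a * b / 2 * (cos (\<alpha> t) * Y t x y z - sin (\<alpha> t) * X t x y z)
      - 12 * \<nu> * deriv \<alpha> t * (sin (\<alpha> t) / X t x y z + cos (\<alpha> t) * Y t x y z / (X t x y z)\<^sup>2))"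
    and "pdy p t x y z = \<rho> * (24 * \<nu>\<^sup>2 * sin (\<alpha> t) / (X t x y z) ^ 3
      + ((deriv \<alpha> t)\<^sup>2 + \<kappa>' t - (\<kappa> t)\<^sup>2 + \<mu> * a\<^sup>2) * X t x y z * sin (\<alpha> t)
      + ((deriv \<alpha> t)\<^sup>2 + \<kappa>' t - (\<kappa> t)\<^sup>2) * Y t x y z * cos (\<alpha> t)
      + \<mu> * a * b / 2 * (sin (\<alpha> t) * Y t x y z + cos (\<alpha> t) * X t x y z)
      + 12 * \<nu> * deriv \<alpha> t * (cos (\<alpha> t) / X t x y z - sin (\<alpha> t) * Y t x y z / (X t x y z)\<^sup>2))"
    and "pdz p t x y z = - 2 * \<rho> * (\<kappa>' t + 2 * (\<kappa> t)\<^sup>2) * z"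
  using \<Omega>_memberD[OF assms] unfolding p_def
  by (intro pd_eqI; auto intro!: field_DERIV simp: fraction_simps)+

lemma profiles_differentiable:
  "\<forall>q\<in>{q. coord 0 q \<in> I}. \<forall>n. (deriv ^^ n) \<alpha> differentiable at (coord 0 q)"
  using smooth_\<alpha> by (simp add: smooth1_def)

(* Omega is open, since X is continuous on the open slab I x R^3. *)
lemma open_\<Omega>: "open \<Omega>"
proof -
  let ?S = "{q. coord 0 q \<in> I}"
  have "?S = fst -` I"
    by (auto simp: coord_def split: prod.split)
  then have open_S: "open ?S"
    using open_I by (simp add: open_vimage_fst)
  have "X \<in> elementary ?S \<alpha>"
    unfolding X_def by (intro elementary_intros)
  then have "continuous_on ?S (uncurry4 X)"
    using elementary_regular[OF open_S profiles_differentiable] by (simp add: regular_def)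
  then have "open (?S \<inter> uncurry4 X -` (- {0}))"
    using continuous_open_preimage[OF _ open_S, of _ "- {0}"] by auto
  moreover have "?S \<inter> uncurry4 X -` (- {0}) = \<Omega>"
    by (auto simp: \<Omega>_def coord_def uncurry4_def split: prod.split)
  ultimately show ?thesis by simp
qed

lemma profiles_differentiable_\<Omega>: "\<forall>q\<in>\<Omega>. \<forall>n. (deriv ^^ n) \<alpha> differentiable at (coord 0 q)"
  using profiles_differentiable by (auto simp: \<Omega>_def coord_def)

lemma fields_elementary:
  "u \<in> elementary \<Omega> \<alpha>" "v \<in> elementary \<Omega> \<alpha>" "w \<in> elementary \<Omega> \<alpha>"
  "H1 \<in> elementary \<Omega> \<alpha>" "H2 \<in> elementary \<Omega> \<alpha>" "H3 \<in> elementary \<Omega> \<alpha>" "p \<in> elementary \<Omega> \<alpha>"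
proof -
  have "(\<lambda>t x y z. \<kappa> t) \<in> elementary \<Omega> \<alpha>" "(\<lambda>t x y z. \<kappa>' t) \<in> elementary \<Omega> \<alpha>"
    unfolding \<kappa>_def \<kappa>'_def using \<alpha>'_nonzero
    by (auto intro!: elementary_intros elementary_divide simp: \<Omega>_def)
  moreover have "X \<in> elementary \<Omega> \<alpha>" "Y \<in> elementary \<Omega> \<alpha>"
    unfolding X_def Y_def by (intro elementary_intros)+
  ultimately show "u \<in> elementary \<Omega> \<alpha>" "v \<in> elementary \<Omega> \<alpha>" "w \<in> elementary \<Omega> \<alpha>"
    "H1 \<in> elementary \<Omega> \<alpha>" "H2 \<in> elementary \<Omega> \<alpha>" "H3 \<in> elementary \<Omega> \<alpha>" "p \<in> elementary \<Omega> \<alpha>"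
    unfolding u_def v_def w_def H1_def H2_def H3_def p_def
    by (auto intro!: elementary_intros elementary_divide simp: \<Omega>_def)
qed

lemma fields_regular:
  "regular \<Omega> u" "regular \<Omega> v" "regular \<Omega> w" "regular \<Omega> H1" "regular \<Omega> H2" "regular \<Omega> H3"
  using elementary_regular[OF open_\<Omega> profiles_differentiable_\<Omega>] fields_elementary by blast+

(* Second derivatives of the velocity, obtained from the first-derivative fields by locality. *)
lemma velocity_second_derivatives:
  assumes q: "(t, x, y, z) \<in> \<Omega>"
  shows "pdx (pdx u) t x y z = - 12 * \<nu> * cos (\<alpha> t) * ((cos (\<alpha> t))\<^sup>2 - (sin (\<alpha> t))\<^sup>2) / (X t x y z) ^ 3
           + 12 * \<nu> * (sin (\<alpha> t))\<^sup>2 * cos (\<alpha> t) / (X t x y z) ^ 3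
           + 36 * \<nu> * sin (\<alpha> t) * (cos (\<alpha> t))\<^sup>2 * Y t x y z / (X t x y z) ^ 4" (is ?u_xx)
    and "pdy (pdy u) t x y z = - 36 * \<nu> * (sin (\<alpha> t))\<^sup>2 * cos (\<alpha> t) / (X t x y z) ^ 3
           + 36 * \<nu> * (sin (\<alpha> t)) ^ 3 * Y t x y z / (X t x y z) ^ 4" (is ?u_yy)
    and "pdx (pdx v) t x y z = - 36 * \<nu> * sin (\<alpha> t) * (cos (\<alpha> t))\<^sup>2 / (X t x y z) ^ 3
           - 36 * \<nu> * (cos (\<alpha> t)) ^ 3 * Y t x y z / (X t x y z) ^ 4" (is ?v_xx)
    and "pdy (pdy v) t x y z = - 12 * \<nu> * sin (\<alpha> t) * ((sin (\<alpha> t))\<^sup>2 - (cos (\<alpha> t))\<^sup>2) / (X t x y z) ^ 3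
           + 12 * \<nu> * sin (\<alpha> t) * (cos (\<alpha> t))\<^sup>2 / (X t x y z) ^ 3
           - 36 * \<nu> * (sin (\<alpha> t))\<^sup>2 * cos (\<alpha> t) * Y t x y z / (X t x y z) ^ 4" (is ?v_yy)
proof -
  have local: "pdx (pdx u) t x y z = pdx ux t x y z" "pdy (pdy u) t x y z = pdy uy t x y z"
    "pdx (pdx v) t x y z = pdx vx t x y z" "pdy (pdy v) t x y z = pdy vy t x y z"
    by (rule pd_local[OF open_\<Omega> _ q, where i = 1, folded pd_indices]
          pd_local[OF open_\<Omega> _ q, where i = 2, folded pd_indices];
        simp add: u_derivatives v_derivatives)+
  show ?u_xx and ?u_yy and ?v_xx and ?v_yy
    using \<Omega>_memberD(2)[OF q] unfolding local ux_def uy_def vx_def vy_def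
    by (intro pd_eqI; auto intro!: field_DERIV simp: fraction_simps)+
qed

(* Pointwise values of w and H, used instead of their definitions so that the derivative
   fields of w and H are not unfolded. *)
lemma field_values:
  "w t x y z = 2 * \<kappa> t * z"
  "H1 t x y z = - (a * X t x y z + b * Y t x y z) * sin (\<alpha> t)"
  "H2 t x y z = (a * X t x y z + b * Y t x y z) * cos (\<alpha> t)"
  "H3 t x y z = - b * z"
  by (simp_all add: w_def H1_def H2_def H3_def)

lemmas pointwise_derivatives = u_derivatives v_derivatives velocity_second_derivatives pressure_derivatives
lemmas derivative_fields = trivial_derivative_fields linear_derivative_fields

lemmas equation_simps = conv_def cr1_def cr2_def cr3_def rot1_def rot2_def rot3_def lap_def
  derivative_fields time_derivatives velocity_in_frame field_values ux_def uy_def vx_def vy_def field_simps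

lemma incompressibility:
  assumes q: "(t, x, y, z) \<in> \<Omega>"
  shows "pdx u t x y z + pdy v t x y z + pdz w t x y z = 0" (is ?div_velocity)
    and "pdx H1 t x y z + pdy H2 t x y z + pdz H3 t x y z = 0" (is ?div_magnetic)
proof -
  show ?div_velocity
    using \<Omega>_memberD(2)[OF q] by (simp add: pointwise_derivatives[OF q] equation_simps)
  show ?div_magnetic
    by (simp add: equation_simps) (use sin_cos_squared_add[of "\<alpha> t"] in algebra)
qed

(* The momentum equations: after inserting all derivatives and passing to the rotating
   frame they reduce to identities between rational functions of X, Y, cos alpha, sin alpha. *)
lemma momentum_equations:
  assumes q: "(t, x, y, z) \<in> \<Omega>"
  shows "pdt u t x y z + conv u v w u t x y z
        - \<mu> * cr1 H1 H2 H3 (rot1 H1 H2 H3) (rot2 H1 H2 H3) (rot3 H1 H2 H3) t x y z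
        + (1 / \<rho>) * pdx p t x y z = \<nu> * lap u t x y z" (is ?momentum_u)
    and "pdt v t x y z + conv u v w v t x y z
        - \<mu> * cr2 H1 H2 H3 (rot1 H1 H2 H3) (rot2 H1 H2 H3) (rot3 H1 H2 H3) t x y z
        + (1 / \<rho>) * pdy p t x y z = \<nu> * lap v t x y z" (is ?momentum_v)
    and "pdt w t x y z + conv u v w w t x y z
        - \<mu> * cr3 H1 H2 H3 (rot1 H1 H2 H3) (rot2 H1 H2 H3) (rot3 H1 H2 H3) t x y z
        + (1 / \<rho>) * pdz p t x y z = \<nu> * lap w t x y z" (is ?momentum_w)
proof -
  note nonzero = \<Omega>_memberD[OF q] \<rho>_nonzero
  note identities = \<kappa>_relation[OF \<Omega>_memberD(1)[OF q]] sin_cos_squared_add[of "\<alpha> t"]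
  show ?momentum_u
    using nonzero by (simp add: pointwise_derivatives[OF q] equation_simps) (use identities in algebra)
  show ?momentum_v
    using nonzero by (simp add: pointwise_derivatives[OF q] equation_simps) (use identities in algebra)
  show ?momentum_w
    using nonzero by (simp add: pointwise_derivatives[OF q] equation_simps power2_eq_square)
qed

(* The induction equations; the Laplacian of the linear field H vanishes. *)
lemma induction_equations:
  assumes q: "(t, x, y, z) \<in> \<Omega>"
  shows "pdt H1 t x y z = rot1 (cr1 u v w H1 H2 H3) (cr2 u v w H1 H2 H3) (cr3 u v w H1 H2 H3) t x y z
        + \<eta> * lap H1 t x y z" (is ?induction_1)
    and "pdt H2 t x y z = rot2 (cr1 u v w H1 H2 H3) (cr2 u v w H1 H2 H3) (cr3 u v w H1 H2 H3) t x y z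
        + \<eta> * lap H2 t x y z" (is ?induction_2)
    and "pdt H3 t x y z = rot3 (cr1 u v w H1 H2 H3) (cr2 u v w H1 H2 H3) (cr3 u v w H1 H2 H3) t x y z
        + \<eta> * lap H3 t x y z" (is ?induction_3)
proof -
  note nonzero = \<Omega>_memberD[OF q]
  note identities = \<kappa>_relation[OF \<Omega>_memberD(1)[OF q]] sin_cos_squared_add[of "\<alpha> t"]
  note curl = curl_cross_product[OF fields_regular q]
  show ?induction_1
    using nonzero unfolding curl
    by (simp add: pointwise_derivatives[OF q] equation_simps) (use identities in algebra)
  show ?induction_2
    using nonzero unfolding curl
    by (simp add: pointwise_derivatives[OF q] equation_simps) (use identities in algebra)
  show ?induction_3
    using nonzero unfolding curl
    by (simp add: pointwise_derivatives[OF q] equation_simps) (use identities in algebra)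
qed

lemma mhd_solution: "MHD_solution \<nu> \<eta> \<mu> \<rho> \<Omega> u v w H1 H2 H3 p"
  unfolding MHD_solution_def
proof (intro conjI)
  show "\<forall>f\<in>{u, v, w, H1, H2, H3, p}. smooth4 \<Omega> f"
    using elementary_smooth4[OF open_\<Omega> profiles_differentiable_\<Omega>] fields_elementary by auto
qed (clarify; intro conjI incompressibility momentum_equations induction_equations; assumption)

end

theorem mainTheorem6:
  fixes \<alpha> :: "real \<Rightarrow> real" and I :: "real set"
    and a b \<nu> \<eta> \<mu>\<^sub>0 \<rho> :: real
    and \<kappa> :: "real \<Rightarrow> real"
    and X Y u v w H1 H2 H3 :: sfield
    and \<Omega> :: "(real \<times> real \<times> real \<times> real) set"
  assumes "\<nu> > 0" and "\<eta> > 0" and "\<mu>\<^sub>0 > 0" and "\<rho> > 0"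
    and "is_interval I" and "open I"
    and "smooth1 I \<alpha>"
    and "\<forall>t\<in>I. deriv \<alpha> t \<noteq> 0"
  defines "\<kappa> \<equiv> \<lambda>t. deriv (deriv \<alpha>) t / (2 * deriv \<alpha> t) + \<mu>\<^sub>0 * a * b / (4 * deriv \<alpha> t)"
    and "X \<equiv> \<lambda>t x y z. x * cos (\<alpha> t) + y * sin (\<alpha> t)"
    and "Y \<equiv> \<lambda>t x y z. - x * sin (\<alpha> t) + y * cos (\<alpha> t)"
    and "\<Omega> \<equiv> {(t, x, y, z). t \<in> I \<and> X t x y z \<noteq> 0}"
    and "u \<equiv> \<lambda>t x y z. - \<kappa> t * x - deriv \<alpha> t * y - 6 * \<nu> * cos (\<alpha> t) / X t x y z
                      + 6 * \<nu> * sin (\<alpha> t) * Y t x y z / (X t x y z)\<^sup>2"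
    and "v \<equiv> \<lambda>t x y z. deriv \<alpha> t * x - \<kappa> t * y - 6 * \<nu> * sin (\<alpha> t) / X t x y z
                      - 6 * \<nu> * cos (\<alpha> t) * Y t x y z / (X t x y z)\<^sup>2"
    and "w \<equiv> \<lambda>t x y z. 2 * \<kappa> t * z"
    and "H1 \<equiv> \<lambda>t x y z. - (a * X t x y z + b * Y t x y z) * sin (\<alpha> t)"
    and "H2 \<equiv> \<lambda>t x y z. (a * X t x y z + b * Y t x y z) * cos (\<alpha> t)"
    and "H3 \<equiv> \<lambda>t x y z. - b * z"
  shows "\<exists>p :: sfield. MHD_solution \<nu> \<eta> \<mu>\<^sub>0 \<rho> \<Omega> u v w H1 H2 H3 p"
proof -
  interpret flow: rotating_flow \<alpha> I \<nu> \<mu>\<^sub>0 \<rho> a b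
    using assms(4,6-8) by unfold_locales auto
  have \<kappa>: "\<kappa> = flow.\<kappa>" and X: "X = flow.X" and Y: "Y = flow.Y"
    unfolding \<kappa>_def X_def Y_def by (simp_all add: fun_eq_iff flow.\<kappa>_def flow.X_def flow.Y_def)
  have "\<Omega> = flow.\<Omega>" "u = flow.u" "v = flow.v" "w = flow.w"
    "H1 = flow.H1" "H2 = flow.H2" "H3 = flow.H3"
    unfolding \<Omega>_def u_def v_def w_def H1_def H2_def H3_def \<kappa> X Y
    by (simp_all add: flow.\<Omega>_def flow.u_def flow.v_def flow.w_def flow.H1_def flow.H2_def flow.H3_def)
  then show ?thesis
    using flow.mhd_solution[of \<eta>] by blast
qed

end
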